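(* Let $\varepsilon\in(0,1)$, $0<c_2<1$, and $C_0\ge1$. Let $P_n^*$ be an entire function and $W:\mathbb C\to(0,\infty)$ a continuous function (both allowed to depend on $n$) such that $C_0^{-1}\le W(a_nz)/W(a_nw)\le C_0$ whenever $w\in[-1+\varepsilon,1-\varepsilon]$ and $|z-w|\le2/n$; set $F_n(z)=P_n^*(z)W(a_nz)$. Suppose that for some $w\in[-1+\varepsilon,1-\varepsilon]$ we have $|F_n(w)|\ge\exp(-n^{c_2})$ and $|F_n(z)|\le\exp(n^{c_2})$ for all $z\in B(w,3/(2n))$. Then $$\int_{B(w,1/(2n))}\big|\log|F_n(z)|\big|^2\,dA(z)\le Cn^{-2+6c_2},$$ where $C$ depends only on $c_2$ and $C_0$ (for $n$ sufficiently large) and $dA$ is planar Lebesgue measure.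
   Context: $a_n>0$ is a positive scaling parameter (in the paper, the Mhaskar–Rakhmanov–Saff number); $B(w,r)$ is the open disc in $\mathbb C$ of radius $r$ centered at $w$. *)

theory Defs
  imports "HOL-Analysis.Analysis"
begin

end

theory Submission
  imports Defs "HOL-Complex_Analysis.Complex_Analysis"
begin

(* Freezing the weight at the centre w turns F = |P| W, up to an additive error
   O(n^c2 + ln C0) in ln F, into |h| for a holomorphic h with |h| <= 1 on B(w, 3/(2n)) and
   |h w| >= exp (-L), L = O(n^c2 + ln C0).  Dividing out the zeros of h near w by Blaschke
   factors of the disc of radius 5/(4n) lowers |h w| by a factor 4/5 each time, so there are
   O(L) of them; the zero-free quotient g obeys the Harnack bound -ln|g| <= 3L + 2 on the half
   disc.  A Blaschke factor with zero a contributes ln|z - a| up to a bounded error, and the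
   square of ln(|z - a|/r) integrates to at most 8 pi r^2 over B(a, 2r) (a dyadic layer-cake
   estimate).  Altogether the integral is O(L^2 r^2) with r = 1/n, i.e. O(n^(2 c2 - 2)). *)

lemma emeasure_ball_complex:
  "r \<ge> 0 \<Longrightarrow> emeasure lborel (ball (c::complex) r) = ennreal (pi * r\<^sup>2)"
  by (simp add: emeasure_ball unit_ball_vol_2)

lemma emeasure_cball_complex:
  "r \<ge> 0 \<Longrightarrow> emeasure lborel (cball (c::complex) r) = ennreal (pi * r\<^sup>2)"
  by (simp add: emeasure_cball unit_ball_vol_2)

lemma ball_cball_in_borel [measurable]:
  "ball (a::complex) r \<in> sets borel" "cball a r \<in> sets borel"
  by auto

lemma power2_add_le: "(x + y)\<^sup>2 \<le> 2 * x\<^sup>2 + 2 * (y::real)\<^sup>2"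
  using power2_sum[of x y] power2_diff[of x y] zero_le_power2[of "x - y"] by linarith

lemma sum_odd_eq_square: "(\<Sum>k<Suc j. real (2*k+1)) = (real j + 1)\<^sup>2"
  by (induction j) (auto simp: power2_eq_square algebra_simps)

lemma odd_le_two_power: "real (2*k+1) \<le> 2 * 2^k"
proof -
  have "k < 2^k" by (rule less_exp)
  then have "2*k+1 \<le> 2 * (2::nat)^k" by linarith
  then show ?thesis by (metis of_nat_le_iff of_nat_mult of_nat_numeral of_nat_power)
qed

lemma ln_squared_le_dyadic:
  fixes d :: real
  assumes "0 < d" "d < 1"
  obtains j where "d * 2^j \<le> 1" "(ln d)\<^sup>2 \<le> (real j + 1)\<^sup>2"
proof
  define t where "t = - log 2 d"
  have t: "t > 0" unfolding t_def using assms by simp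
  define j where "j = nat \<lfloor>t\<rfloor>"
  have j: "real j \<le> t" "t < real j + 1" unfolding j_def using t by linarith+
  have "2 powr real j \<le> 2 powr t" using j by simp
  then show "d * 2^j \<le> 1"
    using assms unfolding t_def by (simp add: powr_realpow powr_minus_divide field_simps)
  have "- ln d = t * ln 2" unfolding t_def log_def by simp
  also have "\<dots> \<le> (real j + 1) * ln 2" using j by (intro mult_right_mono) auto
  also have "\<dots> \<le> real j + 1" using ln_2_less_1 by (simp add: mult_left_le)
  finally show "(ln d)\<^sup>2 \<le> (real j + 1)\<^sup>2"
    using assms by (intro power2_le_iff_abs_le[THEN iffD2]) auto
qed

(* If |z - a| <= 2^-j r then (ln (|z - a|/r))^2 <= (j+1)^2, the sum of the weights 2k+1, k <= j. *)
lemma ln_dist_squared_le_dyadic_sum: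
  fixes a z :: complex
  assumes r: "r > 0"
  shows "ennreal ((ln (cmod (z - a) / r))\<^sup>2) * indicator (ball a (2*r)) z
     \<le> indicator (ball a (2*r)) z + (\<Sum>k. ennreal (real (2*k+1)) * indicator (cball a (r / 2^k)) z)"
proof (cases "z \<in> ball a (2*r) \<and> z \<noteq> a")
  case False
  then show ?thesis by auto
next
  case True
  define d where "d = cmod (z - a) / r"
  have d: "0 < d" "d < 2"
    using True r by (auto simp: d_def dist_norm norm_minus_commute field_simps)
  show ?thesis
  proof (cases "d \<ge> 1")
    case True
    have "ln d \<le> d - 1" using d by (intro ln_le_minus_one) auto
    then have "(ln d)\<^sup>2 \<le> 1" using d True by (intro power_le_one) auto
    then show ?thesis
      using \<open>z \<in> ball a (2*r) \<and> z \<noteq> a\<close> unfolding d_def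
      by (simp add: ennreal_le_1 add_increasing2)
  next
    case False
    obtain j where j: "d * 2^j \<le> 1" "(ln d)\<^sup>2 \<le> (real j + 1)\<^sup>2"
      by (rule ln_squared_le_dyadic[OF d(1)]) (use False in auto)
    have "z \<in> cball a (r / 2^k)" if "k < Suc j" for k
    proof -
      have "d * 2^k \<le> d * 2^j" using that d by (intro mult_left_mono power_increasing) auto
      then show ?thesis
        using j r by (simp add: d_def dist_norm norm_minus_commute field_simps)
    qed
    then have "(\<Sum>k<Suc j. ennreal (real (2*k+1)) * indicator (cball a (r / 2^k)) z)
        = (\<Sum>k<Suc j. ennreal (real (2*k+1)))"
      by (intro sum.cong) auto
    also have "\<dots> = ennreal (\<Sum>k<Suc j. real (2*k+1))"
      by (rule sum_ennreal) simp
    also have "\<dots> = ennreal ((real j + 1)\<^sup>2)"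
      by (simp only: sum_odd_eq_square)
    finally have "ennreal ((ln d)\<^sup>2) \<le> (\<Sum>k<Suc j. ennreal (real (2*k+1)) * indicator (cball a (r / 2^k)) z)"
      using j(2) by (simp add: ennreal_leI)
    also have "\<dots> \<le> (\<Sum>k. ennreal (real (2*k+1)) * indicator (cball a (r / 2^k)) z)"
      by (rule sum_le_suminf) auto
    finally show ?thesis using True unfolding d_def by (simp add: add_increasing)
  qed
qed

lemma nn_integral_ln_dist_squared_le:
  fixes a :: complex
  assumes r: "r > 0"
  shows "(\<integral>\<^sup>+ z \<in> ball a (2*r). ennreal ((ln (cmod (z - a) / r))\<^sup>2) \<partial>lborel)
    \<le> ennreal (8 * pi * r\<^sup>2)"
proof -
  have "(\<integral>\<^sup>+ z \<in> ball a (2*r). ennreal ((ln (cmod (z - a) / r))\<^sup>2) \<partial>lborel)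
     \<le> (\<integral>\<^sup>+ z. indicator (ball a (2*r)) z
          + (\<Sum>k. ennreal (real (2*k+1)) * indicator (cball a (r / 2^k)) z) \<partial>lborel)"
    by (intro nn_integral_mono ln_dist_squared_le_dyadic_sum r)
  also have "\<dots> = (\<integral>\<^sup>+ z. indicator (ball a (2*r)) z \<partial>lborel)
      + (\<integral>\<^sup>+ z. (\<Sum>k. ennreal (real (2*k+1)) * indicator (cball a (r / 2^k)) z) \<partial>lborel)"
    by (rule nn_integral_add) measurable
  also have "(\<integral>\<^sup>+ z. indicator (ball a (2*r)) z \<partial>lborel) = ennreal (4 * pi * r\<^sup>2)"
    using r by (simp add: emeasure_ball_complex power_mult_distrib)
  also have "(\<integral>\<^sup>+ z. (\<Sum>k. ennreal (real (2*k+1)) * indicator (cball a (r / 2^k)) z) \<partial>lborel)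
      = (\<Sum>k. ennreal (real (2*k+1) * (pi * (r / 2^k)\<^sup>2)))"
    using r by (subst nn_integral_suminf, measurable)
      (subst nn_integral_cmult_indicator, auto simp: emeasure_cball_complex ennreal_mult)
  also have "(\<Sum>k. ennreal (real (2*k+1) * (pi * (r / 2^k)\<^sup>2))) \<le> (\<Sum>k. ennreal (2 * pi * r\<^sup>2 * (1/2)^k))"
  proof (intro suminf_le ennreal_leI)
    fix k :: nat
    have "real (2*k+1) * (pi * (r / 2^k)\<^sup>2) = real (2*k+1) * (pi * r\<^sup>2) / (2^k * 2^k)"
      by (simp add: power_divide power2_eq_square)
    also have "\<dots> \<le> (2 * 2^k) * (pi * r\<^sup>2) / (2^k * 2^k)"
      by (intro divide_right_mono mult_right_mono odd_le_two_power) auto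
    also have "\<dots> = 2 * pi * r\<^sup>2 * (1/2)^k"
      by (simp add: field_simps)
    finally show "real (2*k+1) * (pi * (r / 2^k)\<^sup>2) \<le> 2 * pi * r\<^sup>2 * (1/2)^k" .
  qed auto
  also have "(\<Sum>k. ennreal (2 * pi * r\<^sup>2 * (1/2)^k)) = ennreal (4 * pi * r\<^sup>2)"
  proof -
    have "(\<lambda>k. 2 * pi * r\<^sup>2 * (1/2::real)^k) sums (2 * pi * r\<^sup>2 * (1 / (1 - 1/2)))"
      by (intro sums_mult geometric_sums) auto
    then show ?thesis by (subst suminf_ennreal_eq[where x="4 * pi * r\<^sup>2"]) (auto simp: mult.assoc)
  qed
  finally show ?thesis by (simp add: mult.assoc flip: ennreal_plus)
qed

lemma nn_integral_ln_dist_squared_le_half_ball: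
  fixes a c :: complex
  assumes r: "r > 0" and a: "cmod (a - c) \<le> r"
  shows "(\<integral>\<^sup>+ z \<in> ball c (r/2). ennreal ((ln (cmod (z - a) / r))\<^sup>2) \<partial>lborel)
    \<le> ennreal (8 * pi * r\<^sup>2)"
proof -
  have "ball c (r/2) \<subseteq> ball a (2*r)"
    using a r by (subst ball_subset_ball_iff) (auto simp: dist_norm norm_minus_commute)
  then have "(\<integral>\<^sup>+ z \<in> ball c (r/2). ennreal ((ln (cmod (z - a) / r))\<^sup>2) \<partial>lborel)
      \<le> (\<integral>\<^sup>+ z \<in> ball a (2*r). ennreal ((ln (cmod (z - a) / r))\<^sup>2) \<partial>lborel)"
    by (rule nn_set_integral_set_mono)
  also have "\<dots> \<le> ennreal (8 * pi * r\<^sup>2)"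
    using r by (rule nn_integral_ln_dist_squared_le)
  finally show ?thesis .
qed

definition blaschke :: "complex \<Rightarrow> real \<Rightarrow> complex \<Rightarrow> complex \<Rightarrow> complex" where
  "blaschke c \<rho> a z = of_real \<rho> * (z - a) / (of_real (\<rho>\<^sup>2) - cnj (a - c) * (z - c))"

lemma blaschke_at_zero [simp]: "blaschke c \<rho> a a = 0"
  by (simp add: blaschke_def)

lemma norm_blaschke_denominator_identity:
  fixes a z :: complex
  shows "(cmod (of_real (\<rho>\<^sup>2) - cnj a * z))\<^sup>2 - \<rho>\<^sup>2 * (cmod (z - a))\<^sup>2
    = (\<rho>\<^sup>2 - (cmod a)\<^sup>2) * (\<rho>\<^sup>2 - (cmod z)\<^sup>2)"
  by (simp only: cmod_power2) (simp add: power2_eq_square algebra_simps)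

lemma blaschke_denominator_nonzero:
  assumes r: "r > 0" and a: "cmod (a - c) \<le> r" and z: "cmod (z - c) < 3*r/2"
  shows "of_real ((5*r/4)\<^sup>2) - cnj (a - c) * (z - c) \<noteq> 0"
proof
  assume "of_real ((5*r/4)\<^sup>2) - cnj (a - c) * (z - c) = 0"
  then have "(5*r/4)\<^sup>2 = cmod (a - c) * cmod (z - c)"
    by (metis abs_power2 complex_mod_cnj eq_iff_diff_eq_0 norm_mult norm_of_real)
  also have "\<dots> \<le> r * (3*r/2)"
    using a z r by (intro mult_mono) auto
  finally show False using r by (simp add: power2_eq_square)
qed

lemma norm_blaschke_sphere:
  assumes r: "r > 0" and a: "cmod (a - c) \<le> r" and z: "cmod (z - c) = 5*r/4"
  shows "cmod (blaschke c (5*r/4) a z) = 1"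
proof -
  let ?D = "of_real ((5*r/4)\<^sup>2) - cnj (a - c) * (z - c)"
  have "?D \<noteq> 0" using blaschke_denominator_nonzero[OF r a] z r by simp
  have "(cmod ?D)\<^sup>2 = (5*r/4)\<^sup>2 * (cmod ((z - c) - (a - c)))\<^sup>2"
    using norm_blaschke_denominator_identity[of "5*r/4" "a - c" "z - c"] z by simp
  then have "cmod ?D = 5*r/4 * cmod (z - a)"
    using r by (simp add: power_mult_distrib[symmetric] power2_eq_iff_nonneg)
  moreover have "cmod (blaschke c (5*r/4) a z) = 5*r/4 * cmod (z - a) / cmod ?D"
    unfolding blaschke_def norm_divide norm_mult norm_of_real using r by simp
  moreover have "z \<noteq> a" using a z r by auto
  ultimately show ?thesis using \<open>?D \<noteq> 0\<close> r by (simp add: divide_simps)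
qed

lemma norm_blaschke_center:
  assumes r: "r > 0" and a: "cmod (a - c) \<le> r"
  shows "cmod (blaschke c (5*r/4) a c) \<le> 4/5"
proof -
  have at_center: "blaschke c (5*r/4) a c = (c - a) / of_real (5*r/4)"
    using r by (simp add: blaschke_def power2_eq_square field_simps)
  have "cmod (blaschke c (5*r/4) a c) = cmod (c - a) / (5*r/4)"
    unfolding at_center norm_divide norm_of_real using r by simp
  also have "\<dots> \<le> 4/5"
    using a r by (simp add: norm_minus_commute field_simps)
  finally show ?thesis .
qed

lemma ln_norm_blaschke_squared_le:
  assumes r: "r > 0" and a: "cmod (a - c) \<le> r" and z: "cmod (z - c) < r/2"
  shows "(ln (cmod (blaschke c (5*r/4) a z)))\<^sup>2 \<le> 2 * (ln (cmod (z - a) / r))\<^sup>2 + 2"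
proof (cases "z = a")
  case True
  then show ?thesis by simp
next
  case False
  define D where "D = cmod (of_real ((5*r/4)\<^sup>2) - cnj (a - c) * (z - c))"
  have "cmod (cnj (a - c) * (z - c)) \<le> r * (r/2)"
    unfolding norm_mult complex_mod_cnj using a z r by (intro mult_mono) auto
  moreover have "cmod (of_real ((5*r/4)\<^sup>2) :: complex) = 25/16 * r\<^sup>2"
    by (simp only: norm_of_real abs_power2) (simp add: power2_eq_square)
  ultimately have D: "17/16 * r\<^sup>2 \<le> D" "D \<le> 33/16 * r\<^sup>2"
    unfolding D_def
    using norm_triangle_ineq2[of "of_real ((5*r/4)\<^sup>2)" "cnj (a - c) * (z - c)"]
      norm_triangle_ineq4[of "of_real ((5*r/4)\<^sup>2)" "cnj (a - c) * (z - c)"]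
    by (simp_all add: power2_eq_square)
  have "D > 0" using D(1) zero_less_power[of r 2] r by linarith
  define t where "t = (5*r/4) * r / D"
  have t: "20/33 \<le> t" "t \<le> 20/17"
    unfolding t_def using D r \<open>D > 0\<close> by (simp_all add: field_simps power2_eq_square)
  have "cmod (blaschke c (5*r/4) a z) = 5*r/4 * cmod (z - a) / D"
    unfolding blaschke_def D_def norm_divide norm_mult norm_of_real using r by simp
  also have "\<dots> = t * (cmod (z - a) / r)"
    unfolding t_def using r by simp
  finally have ln_blaschke: "ln (cmod (blaschke c (5*r/4) a z)) = ln t + ln (cmod (z - a) / r)"
    using ln_mult[of t "cmod (z - a) / r"] t r False by simp
  have "\<bar>ln t\<bar> \<le> 1"
  proof -
    have "ln t \<le> t - 1" "ln (1/t) \<le> 1/t - 1"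
      using t by (intro ln_le_minus_one; simp)+
    moreover have "1/t \<le> 33/20" using t by (simp add: field_simps)
    ultimately show ?thesis using t by (simp add: ln_div abs_le_iff)
  qed
  then have "(ln t)\<^sup>2 \<le> 1" by (simp add: abs_square_le_1)
  then show ?thesis
    unfolding ln_blaschke using power2_add_le[of "ln t" "ln (cmod (z - a) / r)"] by linarith
qed

(* The factor is unimodular on the circle of radius 5r/4, so the maximum principle keeps the
   quotient bounded by 1. *)
lemma divide_out_blaschke:
  assumes r: "r > 0" and hol: "h holomorphic_on ball c (3*r/2)"
    and bd: "\<And>z. z \<in> cball c (5*r/4) \<Longrightarrow> cmod (h z) \<le> 1"
    and a: "cmod (a - c) \<le> r" and ha: "h a = 0"
  obtains g where "g holomorphic_on ball c (3*r/2)" "\<And>z. z \<in> cball c (5*r/4) \<Longrightarrow> cmod (g z) \<le> 1"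
    "\<And>z. z \<in> ball c (3*r/2) \<Longrightarrow> h z = g z * blaschke c (5*r/4) a z"
    "cmod (h c) \<le> 4/5 * cmod (g c)"
proof -
  let ?D = "\<lambda>z. of_real ((5*r/4)\<^sup>2) - cnj (a - c) * (z - c)"
  define q where "q = (\<lambda>z. if z = a then deriv h a else (h z - h a) / (z - a))"
  define g where "g = (\<lambda>z. q z * ?D z / of_real (5*r/4))"
  have "a \<in> ball c (3*r/2)" using a r by (simp add: dist_norm norm_minus_commute)
  then have "q holomorphic_on ball c (3*r/2)"
    unfolding q_def by (intro pole_lemma[OF hol]) auto
  then have g_hol: "g holomorphic_on ball c (3*r/2)"
    unfolding g_def using r by (intro holomorphic_intros) auto
  have g_eq: "h z = g z * blaschke c (5*r/4) a z" if z: "z \<in> ball c (3*r/2)" for z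
  proof (cases "z = a")
    case True
    then show ?thesis using ha by simp
  next
    case False
    have "?D z \<noteq> 0"
      using blaschke_denominator_nonzero[OF r a] z by (simp add: dist_norm norm_minus_commute)
    have cancel: "\<And>x D R. D \<noteq> 0 \<Longrightarrow> R \<noteq> 0
        \<Longrightarrow> x = (x - 0) / (z - a) * D / R * (R * (z - a) / D)"
      using False by (simp add: field_simps)
    show ?thesis
      unfolding g_def q_def blaschke_def ha if_not_P[OF False]
      by (rule cancel[OF \<open>?D z \<noteq> 0\<close>]) (use r in simp)
  qed
  have g_bound: "cmod (g z) \<le> 1" if z: "z \<in> cball c (5*r/4)" for z
  proof (rule maximum_modulus_frontier[where S = "cball c (5*r/4)" and f = g])
    have sub: "cball c (5*r/4) \<subseteq> ball c (3*r/2)"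
      using r by (intro cball_subset_ball_iff[THEN iffD2]) auto
    show "g holomorphic_on interior (cball c (5*r/4))"
      by (rule holomorphic_on_subset[OF g_hol]) (use sub interior_subset in blast)
    show "continuous_on (closure (cball c (5*r/4))) g"
      using g_hol sub by (auto intro: continuous_on_subset holomorphic_on_imp_continuous_on)
    fix w assume "w \<in> frontier (cball c (5*r/4))"
    then have w: "cmod (w - c) = 5*r/4"
      using r by (simp add: frontier_cball dist_norm norm_minus_commute)
    have "h w = g w * blaschke c (5*r/4) a w"
      using w r by (intro g_eq) (simp add: dist_norm norm_minus_commute)
    then have "cmod (h w) = cmod (g w)" using norm_blaschke_sphere[OF r a w] by (simp add: norm_mult)
    moreover have "cmod (h w) \<le> 1" using w by (intro bd) (simp add: dist_norm norm_minus_commute)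
    ultimately show "cmod (g w) \<le> 1" by simp
  qed (use z in auto)
  have "cmod (h c) = cmod (g c) * cmod (blaschke c (5*r/4) a c)"
    using g_eq[of c] r by (simp add: norm_mult)
  also have "\<dots> \<le> cmod (g c) * (4/5)"
    by (intro mult_left_mono norm_blaschke_center[OF r a]) auto
  finally show ?thesis using that g_hol g_bound g_eq by (simp add: mult.commute)
qed

definition blaschke_factorization ::
    "real \<Rightarrow> complex \<Rightarrow> nat \<Rightarrow> (complex \<Rightarrow> complex) \<Rightarrow> bool" where
  "blaschke_factorization r c k h \<longleftrightarrow> (\<exists>m as g. m \<le> k \<and> (\<forall>i<m. cmod (as i - c) \<le> r)
      \<and> g holomorphic_on ball c (3*r/2) \<and> (\<forall>z\<in>ball c r. g z \<noteq> 0)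
      \<and> (\<forall>z\<in>cball c (5*r/4). cmod (g z) \<le> 1) \<and> cmod (h c) \<le> cmod (g c)
      \<and> (\<forall>z\<in>ball c (3*r/2). h z = g z * (\<Prod>i<m. blaschke c (5*r/4) (as i) z)))"

lemma blaschke_factorization_zero_free:
  assumes "h holomorphic_on ball c (3*r/2)" "\<forall>z\<in>ball c r. h z \<noteq> 0"
    "\<forall>z\<in>cball c (5*r/4). cmod (h z) \<le> 1"
  shows "blaschke_factorization r c k h"
  unfolding blaschke_factorization_def
  by (intro exI[of _ 0] exI[of _ "\<lambda>_. c"] exI[of _ h]) (use assms in auto)

lemma blaschke_factorization_Suc:
  assumes "blaschke_factorization r c k g" "cmod (h c) \<le> cmod (g c)" "cmod (a - c) \<le> r"
    "\<forall>z\<in>ball c (3*r/2). h z = g z * blaschke c (5*r/4) a z"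
  shows "blaschke_factorization r c (Suc k) h"
proof -
  obtain m as f where m: "m \<le> k" "\<forall>i<m. cmod (as i - c) \<le> r" "f holomorphic_on ball c (3*r/2)"
    "\<forall>z\<in>ball c r. f z \<noteq> 0" "\<forall>z\<in>cball c (5*r/4). cmod (f z) \<le> 1" "cmod (g c) \<le> cmod (f c)"
    "\<forall>z\<in>ball c (3*r/2). g z = f z * (\<Prod>i<m. blaschke c (5*r/4) (as i) z)"
    using assms(1) unfolding blaschke_factorization_def by blast
  have "(\<Prod>i<Suc m. blaschke c (5*r/4) ((as(m := a)) i) z)
      = (\<Prod>i<m. blaschke c (5*r/4) (as i) z) * blaschke c (5*r/4) a z" for z
    by (simp add: prod.lessThan_Suc)
  then show ?thesis
    unfolding blaschke_factorization_def using m assms(2-)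
    by (intro exI[of _ "Suc m"] exI[of _ "as(m := a)"] exI[of _ f]) (auto simp: less_Suc_eq)
qed

(* Each zero divided out costs a factor 4/5 at the centre, so at most k zeros can be removed. *)
lemma blaschke_factorization_exists:
  assumes r: "r > 0" and "h holomorphic_on ball c (3*r/2)"
    and "\<forall>z\<in>cball c (5*r/4). cmod (h z) \<le> 1" and "(4/5)^k \<le> cmod (h c)"
  shows "blaschke_factorization r c k h"
  using assms(2-)
proof (induction k arbitrary: h)
  case (0 h)
  show ?case
  proof (rule blaschke_factorization_zero_free[OF 0(1) _ 0(2)], rule ccontr)
    assume "\<not> (\<forall>z\<in>ball c r. h z \<noteq> 0)"
    then obtain a where "a \<in> ball c r" "h a = 0" by auto
    then obtain g where "\<And>z. z \<in> cball c (5*r/4) \<Longrightarrow> cmod (g z) \<le> 1" "cmod (h c) \<le> 4/5 * cmod (g c)"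
      using divide_out_blaschke[OF r 0(1)] 0(2) by (metis dist_norm mem_ball less_imp_le norm_minus_commute)
    moreover have "cmod (g c) \<le> 1" using calculation(1)[of c] r by simp
    ultimately have "cmod (h c) \<le> 4/5" by linarith
    then show False using 0(3) by simp
  qed
next
  case (Suc k h)
  show ?case
  proof (cases "\<forall>z\<in>ball c r. h z \<noteq> 0")
    case True
    then show ?thesis using Suc.prems by (intro blaschke_factorization_zero_free) auto
  next
    case False
    then obtain a where a: "cmod (a - c) \<le> r" "h a = 0"
      by (force simp: dist_norm norm_minus_commute)
    obtain g where g: "g holomorphic_on ball c (3*r/2)" "\<forall>z\<in>cball c (5*r/4). cmod (g z) \<le> 1"
      "\<forall>z\<in>ball c (3*r/2). h z = g z * blaschke c (5*r/4) a z" "cmod (h c) \<le> 4/5 * cmod (g c)"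
      using divide_out_blaschke[OF r Suc.prems(1) _ a] Suc.prems(2) by metis
    have "(4/5)^k \<le> cmod (g c)" using g(4) Suc.prems(3) by simp
    then have "blaschke_factorization r c k g" using Suc.IH g(1,2) by blast
    moreover have "cmod (h c) \<le> cmod (g c)" using g(4) norm_ge_zero[of "g c"] by linarith
    ultimately show ?thesis using a(1) g(3) by (rule blaschke_factorization_Suc)
  qed
qed

lemma norm_diff_less_norm_add_cnj:
  fixes x A :: complex
  assumes "Re x > 0" "Re A > 0"
  shows "cmod (x - A) < cmod (x + cnj A)"
proof -
  have "(cmod (x - A))\<^sup>2 = (Re x - Re A)\<^sup>2 + (Im x - Im A)\<^sup>2"
    and "(cmod (x + cnj A))\<^sup>2 = (Re x + Re A)\<^sup>2 + (Im x - Im A)\<^sup>2"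
    by (simp_all add: cmod_power2)
  moreover have "Re x * Re A > 0" using assms by simp
  ultimately have "(cmod (x - A))\<^sup>2 < (cmod (x + cnj A))\<^sup>2"
    by (simp add: power2_diff power2_sum algebra_simps)
  then show ?thesis by (rule power2_less_imp_less) simp
qed

lemma Re_le_three_Re_if_norm_diff_le_half:
  fixes x A :: complex
  assumes "Re A > 0" and le: "cmod (x - A) \<le> 1/2 * cmod (x + cnj A)"
  shows "Re x \<le> 3 * Re A"
proof (rule ccontr)
  assume "\<not> ?thesis"
  then have "(Re x + Re A) / 2 < Re x - Re A" "0 \<le> (Re x + Re A) / 2" using assms(1) by auto
  then have "((Re x + Re A) / 2)\<^sup>2 < (Re x - Re A)\<^sup>2" by (intro power_strict_mono) auto
  moreover have "(cmod (x - A))\<^sup>2 \<le> 1/4 * (cmod (x + cnj A))\<^sup>2"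
    using power_mono[OF le, of 2] by (simp add: power_mult_distrib power2_eq_square)
  then have "(Re x - Re A)\<^sup>2 + (Im x - Im A)\<^sup>2 \<le> 1/4 * ((Re x + Re A)\<^sup>2 + (Im x - Im A)\<^sup>2)"
    by (simp add: cmod_power2)
  ultimately show False by (simp add: power_divide) (use zero_le_power2[of "Im x - Im A"] in linarith)
qed

(* Schwarz's lemma for the Cayley transform (psi - psi c) / (psi + cnj (psi c)). *)
lemma harnack_Re_half_ball:
  fixes \<psi> :: "complex \<Rightarrow> complex"
  assumes r: "r > 0" and hol: "\<psi> holomorphic_on ball c r"
    and pos: "\<And>z. z \<in> ball c r \<Longrightarrow> Re (\<psi> z) > 0" and z: "cmod (z - c) \<le> r/2"
  shows "Re (\<psi> z) \<le> 3 * Re (\<psi> c)"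
proof -
  define A where "A = \<psi> c"
  have "Re A > 0" unfolding A_def using pos r by simp
  define T where "T = (\<lambda>\<zeta>. (\<psi> (c + of_real r * \<zeta>) - A) / (\<psi> (c + of_real r * \<zeta>) + cnj A))"
  have in_ball: "c + of_real r * \<zeta> \<in> ball c r" if "cmod \<zeta> < 1" for \<zeta>
    using that r by (simp add: dist_norm norm_mult)
  have den: "\<psi> (c + of_real r * \<zeta>) + cnj A \<noteq> 0" if "cmod \<zeta> < 1" for \<zeta>
  proof -
    have "Re (\<psi> (c + of_real r * \<zeta>) + cnj A) > 0"
      using pos[OF in_ball[OF that]] \<open>Re A > 0\<close> by simp
    then show ?thesis by force
  qed
  have "(\<lambda>\<zeta>. \<psi> (c + of_real r * \<zeta>)) holomorphic_on ball 0 1"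
    using in_ball by (intro holomorphic_on_compose_gen[OF _ hol, unfolded o_def] holomorphic_intros) auto
  then have T_hol: "T holomorphic_on ball 0 1"
    unfolding T_def using den by (intro holomorphic_intros) auto
  have T_lt: "cmod (T \<zeta>) < 1" if "cmod \<zeta> < 1" for \<zeta>
    using norm_diff_less_norm_add_cnj[OF pos[OF in_ball[OF that]] \<open>Re A > 0\<close>] den[OF that]
    unfolding T_def by (simp add: norm_divide divide_less_eq)
  define \<zeta> where "\<zeta> = (z - c) / of_real r"
  have \<zeta>: "cmod \<zeta> \<le> 1/2" unfolding \<zeta>_def using z r by (simp add: norm_divide divide_le_eq)
  have "cmod (T \<zeta>) \<le> cmod \<zeta>"
    by (rule Schwarz_Lemma(1)[OF T_hol _ T_lt]) (use \<zeta> in \<open>auto simp: T_def A_def\<close>)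
  then have "cmod (T \<zeta>) \<le> 1/2" using \<zeta> by linarith
  moreover have z_eq: "c + of_real r * \<zeta> = z" unfolding \<zeta>_def using r by simp
  moreover have "\<psi> z + cnj A \<noteq> 0" using den[of \<zeta>] \<zeta> z_eq by simp
  ultimately have "cmod (\<psi> z - A) \<le> 1/2 * cmod (\<psi> z + cnj A)"
    unfolding T_def z_eq by (simp add: norm_divide divide_le_eq)
  then show ?thesis
    using Re_le_three_Re_if_norm_diff_le_half[OF \<open>Re A > 0\<close>] unfolding A_def by blast
qed

lemma harnack_neg_ln_norm:
  fixes g :: "complex \<Rightarrow> complex"
  assumes r: "r > 0" and hol: "g holomorphic_on ball c r" and nz: "\<And>z. z \<in> ball c r \<Longrightarrow> g z \<noteq> 0"
    and bd: "\<And>z. z \<in> ball c r \<Longrightarrow> cmod (g z) \<le> 1" and z: "cmod (z - c) \<le> r/2"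
  shows "- ln (cmod (g z)) \<le> 3 * (- ln (cmod (g c))) + 2"
proof -
  obtain \<phi> where \<phi>: "\<phi> holomorphic_on ball c r" "\<And>z. z \<in> ball c r \<Longrightarrow> g z = exp (\<phi> z)"
    using contractible_imp_holomorphic_log[OF hol convex_imp_contractible[OF convex_ball] nz] by metis
  have ln_g: "ln (cmod (g w)) = Re (\<phi> w)" if "w \<in> ball c r" for w
    using \<phi>(2)[OF that] by (simp add: norm_exp_eq_Re)
  have "Re (\<phi> w) \<le> 0" if "w \<in> ball c r" for w
    using bd[OF that] ln_g[OF that] nz[OF that] by (metis ln_le_zero_iff zero_less_norm_iff)
  then have "Re (1 - \<phi> z) \<le> 3 * Re (1 - \<phi> c)"
    using r z by (intro harnack_Re_half_ball[where r = r] holomorphic_intros \<phi>(1)) fastforce+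
  moreover have "z \<in> ball c r" "c \<in> ball c r" using z r by (auto simp: dist_norm norm_minus_commute)
  ultimately show ?thesis using ln_g by simp
qed

lemma ln_norm_squared_le_harnack:
  fixes g :: "complex \<Rightarrow> complex"
  assumes r: "r > 0" and hol: "g holomorphic_on ball c r" and nz: "\<And>z. z \<in> ball c r \<Longrightarrow> g z \<noteq> 0"
    and bd: "\<And>z. z \<in> ball c r \<Longrightarrow> cmod (g z) \<le> 1" and z: "cmod (z - c) \<le> r/2"
    and L: "- ln (cmod (g c)) \<le> L"
  shows "(ln (cmod (g z)))\<^sup>2 \<le> (3*L+2)\<^sup>2"
proof -
  have "- ln (cmod (g z)) \<le> 3 * (- ln (cmod (g c))) + 2"
    by (rule harnack_neg_ln_norm[OF r hol nz bd z])
  moreover have "z \<in> ball c r" using z r by (simp add: dist_norm norm_minus_commute)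
  then have "ln (cmod (g z)) \<le> 0" using bd nz by simp
  ultimately show ?thesis using L by (intro power2_le_iff_abs_le[THEN iffD2]) auto
qed

lemma ln_norm_mult_prod:
  fixes g :: complex and b :: "'a \<Rightarrow> complex"
  assumes "finite A" "g \<noteq> 0" "\<And>i. i \<in> A \<Longrightarrow> b i \<noteq> 0"
  shows "ln (cmod (g * (\<Prod>i\<in>A. b i))) = ln (cmod g) + (\<Sum>i\<in>A. ln (cmod (b i)))"
proof -
  have "ln (\<Prod>i\<in>A. cmod (b i)) = (\<Sum>i\<in>A. ln (cmod (b i)))"
    by (rule ln_prod) (use assms in auto)
  moreover have "(\<Prod>i\<in>A. cmod (b i)) > 0"
    by (rule prod_pos) (use assms in auto)
  ultimately show ?thesis
    using assms(2) by (simp add: norm_mult prod_norm[symmetric] ln_mult)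
qed

lemma ln_norm_squared_le_zero_sum:
  fixes h :: "complex \<Rightarrow> complex"
  assumes r: "r > 0" and hol: "h holomorphic_on ball c (3*r/2)"
    and bd: "\<And>z. z \<in> ball c (3*r/2) \<Longrightarrow> cmod (h z) \<le> 1"
    and hc: "(4/5)^k \<le> cmod (h c)" and L: "- ln (cmod (h c)) \<le> L"
  obtains m as where "m \<le> k" "\<And>i. i < m \<Longrightarrow> cmod (as i - c) \<le> r"
    "\<And>z. z \<in> ball c (r/2) \<Longrightarrow> (ln (cmod (h z)))\<^sup>2
        \<le> 2 * (3*L+2)\<^sup>2 + 4 * (real m)\<^sup>2 + (\<Sum>i<m. 4 * real m * (ln (cmod (z - as i) / r))\<^sup>2)"
proof -
  have "blaschke_factorization r c k h"
    using r hol bd hc by (intro blaschke_factorization_exists) (auto simp: dist_norm)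
  then obtain m as g where m: "m \<le> k" "\<forall>i<m. cmod (as i - c) \<le> r" "g holomorphic_on ball c (3*r/2)"
    "\<forall>z\<in>ball c r. g z \<noteq> 0" "\<forall>z\<in>cball c (5*r/4). cmod (g z) \<le> 1" "cmod (h c) \<le> cmod (g c)"
    "\<forall>z\<in>ball c (3*r/2). h z = g z * (\<Prod>i<m. blaschke c (5*r/4) (as i) z)"
    unfolding blaschke_factorization_def by blast
  let ?B = "\<lambda>i z. blaschke c (5*r/4) (as i) z"
  have "0 < cmod (h c)" using hc by (smt (verit) zero_less_power zero_less_divide_iff)
  then have Lg: "- ln (cmod (g c)) \<le> L" using m(6) L by (smt (verit) ln_le_cancel_iff)
  have "(ln (cmod (h z)))\<^sup>2
        \<le> 2 * (3*L+2)\<^sup>2 + 4 * (real m)\<^sup>2 + (\<Sum>i<m. 4 * real m * (ln (cmod (z - as i) / r))\<^sup>2)"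
    if z: "z \<in> ball c (r/2)" for z
  proof (cases "h z = 0")
    case True
    then show ?thesis by (simp add: sum_nonneg)
  next
    case False
    have hz: "h z = g z * (\<Prod>i<m. ?B i z)" using m(7) z r by auto
    have "ln (cmod (h z)) = ln (cmod (g z)) + (\<Sum>i<m. ln (cmod (?B i z)))"
      using False unfolding hz by (intro ln_norm_mult_prod) auto
    then have "(ln (cmod (h z)))\<^sup>2 \<le> 2 * (ln (cmod (g z)))\<^sup>2 + 2 * (\<Sum>i<m. ln (cmod (?B i z)))\<^sup>2"
      using power2_add_le by presburger
    moreover have "(ln (cmod (g z)))\<^sup>2 \<le> (3*L+2)\<^sup>2"
      using m(3-5) r z Lg
      by (intro ln_norm_squared_le_harnack[where r = r])
        (auto intro: holomorphic_on_subset simp: dist_norm norm_minus_commute)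
    moreover have "(\<Sum>i<m. ln (cmod (?B i z)))\<^sup>2 \<le> (\<Sum>i<m. (ln (cmod (?B i z)))\<^sup>2) * real m"
      using sum_squared_le_sum_of_squares[of "\<lambda>i. ln (cmod (?B i z))" "{..<m}"] by simp
    moreover have "\<dots> \<le> (\<Sum>i<m. 2 * (ln (cmod (z - as i) / r))\<^sup>2 + 2) * real m"
      using m(2) z r
      by (intro mult_right_mono sum_mono ln_norm_blaschke_squared_le) (auto simp: dist_norm norm_minus_commute)
    moreover have "\<dots> = 2 * (real m)\<^sup>2 + (\<Sum>i<m. 4 * real m * (ln (cmod (z - as i) / r))\<^sup>2) / 2"
      by (simp add: sum.distrib sum_distrib_left sum_distrib_right sum_divide_distrib power2_eq_square algebra_simps)
    ultimately show ?thesis by linarith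
  qed
  then show ?thesis using that m(1,2) by blast
qed

lemma nn_set_integral_le_const_add_sum:
  fixes u :: "'a \<Rightarrow> real" and f :: "'i \<Rightarrow> 'a \<Rightarrow> real"
  assumes [measurable]: "S \<in> sets M" "\<And>i. f i \<in> borel_measurable M"
    and nonneg: "C \<ge> 0" "\<And>i x. f i x \<ge> 0"
    and bound: "\<And>x. x \<in> S \<Longrightarrow> u x \<le> C + (\<Sum>i\<in>I. f i x)"
  shows "(\<integral>\<^sup>+ x \<in> S. ennreal (u x) \<partial>M)
    \<le> ennreal C * emeasure M S + (\<Sum>i\<in>I. \<integral>\<^sup>+ x \<in> S. ennreal (f i x) \<partial>M)"
proof -
  have "ennreal (u x) \<le> ennreal C + (\<Sum>i\<in>I. ennreal (f i x))" if "x \<in> S" for x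
  proof -
    have "ennreal (u x) \<le> ennreal (C + (\<Sum>i\<in>I. f i x))" using bound[OF that] by (rule ennreal_leI)
    then show ?thesis using nonneg by (simp add: sum_nonneg sum_ennreal)
  qed
  then have "(\<integral>\<^sup>+ x \<in> S. ennreal (u x) \<partial>M)
      \<le> (\<integral>\<^sup>+ x \<in> S. (ennreal C + (\<Sum>i\<in>I. ennreal (f i x))) \<partial>M)"
    by (intro nn_integral_mono) (simp split: split_indicator)
  also have "\<dots> = ennreal C * emeasure M S + (\<Sum>i\<in>I. \<integral>\<^sup>+ x \<in> S. ennreal (f i x) \<partial>M)"
    by (simp add: nn_set_integral_add nn_integral_cmult_indicator sum_distrib_right nn_integral_sum)
  finally show ?thesis .
qed

lemma nn_integral_ln_norm_squared_le_zero_count: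
  fixes h :: "complex \<Rightarrow> complex"
  assumes r: "r > 0" and hol: "h holomorphic_on ball c (3*r/2)"
    and bd: "\<And>z. z \<in> ball c (3*r/2) \<Longrightarrow> cmod (h z) \<le> 1"
    and hc: "(4/5)^k \<le> cmod (h c)" and L: "- ln (cmod (h c)) \<le> L"
  shows "(\<integral>\<^sup>+ z \<in> ball c (r/2). ennreal ((ln (cmod (h z)))\<^sup>2) \<partial>lborel)
    \<le> ennreal (pi * ((3*L+2)\<^sup>2 + 33 * (real k)\<^sup>2) * r\<^sup>2)"
proof -
  obtain m as where m: "m \<le> k" "\<And>i. i < m \<Longrightarrow> cmod (as i - c) \<le> r"
    and pw: "\<And>z. z \<in> ball c (r/2) \<Longrightarrow> (ln (cmod (h z)))\<^sup>2
        \<le> 2 * (3*L+2)\<^sup>2 + 4 * (real m)\<^sup>2 + (\<Sum>i<m. 4 * real m * (ln (cmod (z - as i) / r))\<^sup>2)"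
    using ln_norm_squared_le_zero_sum[OF r hol bd hc L] by metis
  have "(\<integral>\<^sup>+ z \<in> ball c (r/2). ennreal ((ln (cmod (h z)))\<^sup>2) \<partial>lborel)
      \<le> ennreal (2 * (3*L+2)\<^sup>2 + 4 * (real m)\<^sup>2) * emeasure lborel (ball c (r/2))
        + (\<Sum>i<m. \<integral>\<^sup>+ z \<in> ball c (r/2). ennreal (4 * real m * (ln (cmod (z - as i) / r))\<^sup>2) \<partial>lborel)"
  proof (rule nn_set_integral_le_const_add_sum)
    show "(\<lambda>z. 4 * real m * (ln (cmod (z - as i) / r))\<^sup>2) \<in> borel_measurable lborel" for i
      by measurable
  qed (use pw in auto)
  also have "\<dots> \<le> ennreal (2 * (3*L+2)\<^sup>2 + 4 * (real m)\<^sup>2) * ennreal (pi * (r/2)\<^sup>2)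
      + (\<Sum>i<m. ennreal (4 * real m) * ennreal (8 * pi * r\<^sup>2))"
  proof (intro add_mono sum_mono)
    fix i assume "i \<in> {..<m}"
    then have "(\<integral>\<^sup>+ z \<in> ball c (r/2). ennreal ((ln (cmod (z - as i) / r))\<^sup>2) \<partial>lborel)
        \<le> ennreal (8 * pi * r\<^sup>2)"
      using r m(2) by (intro nn_integral_ln_dist_squared_le_half_ball) auto
    then show "(\<integral>\<^sup>+ z \<in> ball c (r/2). ennreal (4 * real m * (ln (cmod (z - as i) / r))\<^sup>2) \<partial>lborel)
        \<le> ennreal (4 * real m) * ennreal (8 * pi * r\<^sup>2)"
      by (simp add: ennreal_mult nn_integral_cmult mult.assoc mult_left_mono)
  qed (use r in \<open>simp add: emeasure_ball_complex\<close>)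
  also have "\<dots> = ennreal ((2 * (3*L+2)\<^sup>2 + 4 * (real m)\<^sup>2) * (pi * (r/2)\<^sup>2)
      + real m * (4 * real m * (8 * pi * r\<^sup>2)))"
    by (simp add: ennreal_of_nat_eq_real_of_nat ennreal_mult[symmetric] ennreal_plus[symmetric] del: ennreal_plus)
  also have "\<dots> \<le> ennreal (pi * ((3*L+2)\<^sup>2 + 33 * (real k)\<^sup>2) * r\<^sup>2)"
  proof (rule ennreal_leI)
    have "(real m)\<^sup>2 \<le> (real k)\<^sup>2" using m(1) by (intro power_mono) auto
    then have "(3*L+2)\<^sup>2 / 2 + 33 * (real m)\<^sup>2 \<le> (3*L+2)\<^sup>2 + 33 * (real k)\<^sup>2"
      using zero_le_power2[of "3*L+2"] by linarith
    then have "pi * r\<^sup>2 * ((3*L+2)\<^sup>2 / 2 + 33 * (real m)\<^sup>2)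
        \<le> pi * r\<^sup>2 * ((3*L+2)\<^sup>2 + 33 * (real k)\<^sup>2)"
      by (intro mult_left_mono) auto
    moreover have "(2 * (3*L+2)\<^sup>2 + 4 * (real m)\<^sup>2) * (pi * (r/2)\<^sup>2) + real m * (4 * real m * (8 * pi * r\<^sup>2))
        = pi * r\<^sup>2 * ((3*L+2)\<^sup>2 / 2 + 33 * (real m)\<^sup>2)"
      by (simp add: power2_eq_square algebra_simps)
    ultimately show "(2 * (3*L+2)\<^sup>2 + 4 * (real m)\<^sup>2) * (pi * (r/2)\<^sup>2) + real m * (4 * real m * (8 * pi * r\<^sup>2))
        \<le> pi * ((3*L+2)\<^sup>2 + 33 * (real k)\<^sup>2) * r\<^sup>2"
      by (simp add: mult_ac)
  qed
  finally show ?thesis .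
qed

lemma four_fifths_power_le_exp: "(4/5::real) ^ k \<le> exp (- real k / 5)"
proof -
  have "ln (4/5::real) \<le> - 1/5" using ln_le_minus_one[of "4/5::real"] by simp
  then have "(4/5::real) ^ k = exp (real k * ln (4/5))" by (simp add: exp_of_nat_mult)
  also have "\<dots> \<le> exp (- real k / 5)"
    using mult_left_mono[OF \<open>ln (4/5::real) \<le> - 1/5\<close>, of "real k"] by simp
  finally show ?thesis .
qed

lemma nn_integral_ln_norm_squared_le:
  fixes h :: "complex \<Rightarrow> complex"
  assumes r: "r > 0" and hol: "h holomorphic_on ball c (3*r/2)"
    and bd: "\<And>z. z \<in> ball c (3*r/2) \<Longrightarrow> cmod (h z) \<le> 1"
    and hc: "exp (- L) \<le> cmod (h c)"
  shows "(\<integral>\<^sup>+ z \<in> ball c (r/2). ennreal ((ln (cmod (h z)))\<^sup>2) \<partial>lborel)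
    \<le> ennreal (34 * pi * (5*L+2)\<^sup>2 * r\<^sup>2)"
proof -
  have "cmod (h c) \<le> 1" using bd r by simp
  then have "exp (- L) \<le> 1" using hc by linarith
  then have L: "L \<ge> 0" by simp
  define k where "k = nat \<lceil>5 * L\<rceil>"
  have k: "5 * L \<le> real k" "real k \<le> 5 * L + 2" unfolding k_def using L by linarith+
  have "exp (- real k / 5) \<le> exp (- L)" using k(1) by simp
  then have "(4/5)^k \<le> cmod (h c)" using four_fifths_power_le_exp[of k] hc by linarith
  moreover have "- ln (cmod (h c)) \<le> L"
    using hc by (smt (verit) ln_exp ln_mono exp_gt_zero)
  ultimately have "(\<integral>\<^sup>+ z \<in> ball c (r/2). ennreal ((ln (cmod (h z)))\<^sup>2) \<partial>lborel)
      \<le> ennreal (pi * ((3*L+2)\<^sup>2 + 33 * (real k)\<^sup>2) * r\<^sup>2)"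
    using nn_integral_ln_norm_squared_le_zero_count[OF r hol bd] by blast
  also have "\<dots> \<le> ennreal (34 * pi * (5*L+2)\<^sup>2 * r\<^sup>2)"
  proof (intro ennreal_leI mult_right_mono)
    have "(3*L+2)\<^sup>2 \<le> (5*L+2)\<^sup>2" "(real k)\<^sup>2 \<le> (5*L+2)\<^sup>2" using L k by (intro power_mono; simp)+
    then show "pi * ((3*L+2)\<^sup>2 + 33 * (real k)\<^sup>2) \<le> 34 * pi * (5*L+2)\<^sup>2" by simp
  qed simp
  finally show ?thesis .
qed

lemma nn_set_integral_square_le:
  fixes u v :: "'a \<Rightarrow> real"
  assumes [measurable]: "v \<in> borel_measurable M" "S \<in> sets M"
    and close: "\<And>x. x \<in> S \<Longrightarrow> \<bar>u x - v x\<bar> \<le> B"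
  shows "(\<integral>\<^sup>+ x \<in> S. ennreal ((u x)\<^sup>2) \<partial>M)
    \<le> 2 * (\<integral>\<^sup>+ x \<in> S. ennreal ((v x)\<^sup>2) \<partial>M) + ennreal (2 * B\<^sup>2) * emeasure M S"
proof -
  have "ennreal ((u x)\<^sup>2) \<le> 2 * ennreal ((v x)\<^sup>2) + ennreal (2 * B\<^sup>2)" if "x \<in> S" for x
  proof -
    have "(u x - v x)\<^sup>2 \<le> B\<^sup>2" using power_mono[OF close[OF that], of 2] by simp
    then have "(u x)\<^sup>2 \<le> 2 * (v x)\<^sup>2 + 2 * B\<^sup>2"
      using power2_add_le[of "v x" "u x - v x"] by simp
    then have "ennreal ((u x)\<^sup>2) \<le> ennreal (2 * (v x)\<^sup>2 + 2 * B\<^sup>2)" by (rule ennreal_leI)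
    then show ?thesis by (simp add: ennreal_mult)
  qed
  then have "(\<integral>\<^sup>+ x \<in> S. ennreal ((u x)\<^sup>2) \<partial>M)
      \<le> (\<integral>\<^sup>+ x \<in> S. (2 * ennreal ((v x)\<^sup>2) + ennreal (2 * B\<^sup>2)) \<partial>M)"
    by (intro nn_integral_mono) (simp split: split_indicator)
  also have "\<dots> = 2 * (\<integral>\<^sup>+ x \<in> S. ennreal ((v x)\<^sup>2) \<partial>M) + ennreal (2 * B\<^sup>2) * emeasure M S"
    by (simp add: nn_set_integral_add nn_integral_cmult nn_integral_cmult_indicator mult.assoc)
  finally show ?thesis .
qed

lemma nn_integral_ln_weighted_squared_le:
  fixes P :: "complex \<Rightarrow> complex" and V :: "complex \<Rightarrow> real"
  assumes r: "r > 0" and X: "X \<ge> 1" and C0: "C0 \<ge> 1"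
    and hol: "P holomorphic_on UNIV"
    and V_pos: "\<And>z. z \<in> ball c (3*r/2) \<Longrightarrow> V z > 0"
    and ratio: "\<And>z. z \<in> ball c (3*r/2) \<Longrightarrow> 1/C0 \<le> V z / V c \<and> V z / V c \<le> C0"
    and lower: "exp (- X) \<le> cmod (P c) * V c"
    and upper: "\<And>z. z \<in> ball c (3*r/2) \<Longrightarrow> cmod (P z) * V z \<le> exp X"
  shows "(\<integral>\<^sup>+ z \<in> ball c (r/2). ennreal ((ln (cmod (P z) * V z))\<^sup>2) \<partial>lborel)
    \<le> ennreal (69 * pi * (12 + 5 * ln C0)\<^sup>2 * X\<^sup>2 * r\<^sup>2)"
proof -
  define l where "l = ln C0"
  have l: "l \<ge> 0" unfolding l_def using C0 by simp
  define M where "M = (12 + 5 * l) * X"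
  have M: "5 * (2*X + l) + 2 \<le> M" "X + 2 * l \<le> M"
    using X l mult_left_mono[OF X l] unfolding M_def by (simp_all add: algebra_simps)
  have Vc: "V c > 0" using V_pos r by simp
  define h where "h = (\<lambda>z. P z * of_real (V c / (C0 * exp X)))"
  have [measurable]: "h \<in> borel_measurable borel"
    unfolding h_def using holomorphic_on_imp_continuous_on[OF hol]
    by (intro borel_measurable_continuous_onI continuous_intros)
  have norm_h: "cmod (h z) = cmod (P z) * V c / (C0 * exp X)" for z
    unfolding h_def norm_mult norm_of_real using Vc C0 by simp
  have h_bound: "cmod (h z) \<le> 1" if z: "z \<in> ball c (3*r/2)" for z
  proof -
    have "V c \<le> C0 * V z" using ratio[OF z] V_pos[OF z] Vc C0 by (simp add: field_simps)
    then have "cmod (P z) * V c \<le> C0 * (cmod (P z) * V z)"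
      using mult_left_mono[of "V c" "C0 * V z" "cmod (P z)"] by (simp add: mult_ac)
    also have "\<dots> \<le> C0 * exp X" using upper[OF z] C0 by simp
    finally show ?thesis unfolding norm_h using C0 by simp
  qed
  have "exp (- (2*X + l)) = exp (- X) / (C0 * exp X)"
    unfolding l_def using C0 by (simp add: exp_diff exp_add exp_minus field_simps mult_exp_exp)
  also have "\<dots> \<le> cmod (h c)"
    unfolding norm_h using lower C0 by (intro divide_right_mono) auto
  finally have "(\<integral>\<^sup>+ z \<in> ball c (r/2). ennreal ((ln (cmod (h z)))\<^sup>2) \<partial>lborel)
      \<le> ennreal (34 * pi * (5 * (2*X + l) + 2)\<^sup>2 * r\<^sup>2)"
    using r h_bound by (intro nn_integral_ln_norm_squared_le)
      (auto simp: h_def intro!: holomorphic_intros holomorphic_on_subset[OF hol])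
  also have "\<dots> \<le> ennreal (34 * pi * M\<^sup>2 * r\<^sup>2)"
    using M(1) X l by (intro ennreal_leI mult_right_mono mult_left_mono power_mono) auto
  finally have int_h: "(\<integral>\<^sup>+ z \<in> ball c (r/2). ennreal ((ln (cmod (h z)))\<^sup>2) \<partial>lborel)
      \<le> ennreal (34 * pi * M\<^sup>2 * r\<^sup>2)" .
  have "\<bar>ln (cmod (P z) * V z) - ln (cmod (h z))\<bar> \<le> M" if z: "z \<in> ball c (r/2)" for z
  proof (cases "P z = 0")
    case True
    then show ?thesis using M(2) X l by (simp add: h_def)
  next
    case False
    have z': "z \<in> ball c (3*r/2)" using z r by auto
    then have "ln (1/C0) \<le> ln (V z / V c)" "ln (V z / V c) \<le> ln C0"
      using ratio[OF z'] V_pos[OF z'] Vc C0 by (simp_all add: ln_le_cancel_iff)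
    then have "\<bar>ln (V z) - ln (V c)\<bar> \<le> l"
      using V_pos[OF z'] Vc C0 unfolding l_def by (simp add: ln_div)
    moreover have "ln (cmod (P z) * V z) - ln (cmod (h z)) = (ln (V z) - ln (V c)) + l + X"
      using False V_pos[OF z'] Vc C0 unfolding norm_h l_def by (simp add: ln_mult ln_div)
    ultimately show ?thesis using M(2) X l by linarith
  qed
  then have "(\<integral>\<^sup>+ z \<in> ball c (r/2). ennreal ((ln (cmod (P z) * V z))\<^sup>2) \<partial>lborel)
      \<le> 2 * (\<integral>\<^sup>+ z \<in> ball c (r/2). ennreal ((ln (cmod (h z)))\<^sup>2) \<partial>lborel)
        + ennreal (2 * M\<^sup>2) * emeasure lborel (ball c (r/2))"
    by (intro nn_set_integral_square_le) measurable
  also have "\<dots> \<le> 2 * ennreal (34 * pi * M\<^sup>2 * r\<^sup>2) + ennreal (2 * M\<^sup>2) * ennreal (pi * (r/2)\<^sup>2)"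
    using int_h r by (intro add_mono mult_left_mono) (auto simp: emeasure_ball_complex)
  also have "\<dots> = ennreal (2 * (34 * pi * M\<^sup>2 * r\<^sup>2) + 2 * M\<^sup>2 * (pi * (r/2)\<^sup>2))"
    by (subst ennreal_plus) (auto simp: ennreal_mult mult.assoc)
  also have "\<dots> \<le> ennreal (69 * pi * (12 + 5 * ln C0)\<^sup>2 * X\<^sup>2 * r\<^sup>2)"
  proof (rule ennreal_leI)
    have "2 * (34 * pi * M\<^sup>2 * r\<^sup>2) + 2 * M\<^sup>2 * (pi * (r/2)\<^sup>2) = 137/2 * (pi * M\<^sup>2 * r\<^sup>2)"
      by (simp add: power_divide power2_eq_square algebra_simps)
    also have "\<dots> \<le> 69 * (pi * M\<^sup>2 * r\<^sup>2)"
      by (intro mult_right_mono) auto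
    also have "\<dots> = 69 * pi * (12 + 5 * ln C0)\<^sup>2 * X\<^sup>2 * r\<^sup>2"
      unfolding M_def l_def by (simp add: power_mult_distrib)
    finally show "2 * (34 * pi * M\<^sup>2 * r\<^sup>2) + 2 * M\<^sup>2 * (pi * (r/2)\<^sup>2)
        \<le> 69 * pi * (12 + 5 * ln C0)\<^sup>2 * X\<^sup>2 * r\<^sup>2" .
  qed
  finally show ?thesis .
qed

lemma powr_squared_mult_inverse_squared:
  fixes x c :: real
  assumes "x > 0"
  shows "(x powr c)\<^sup>2 * (1/x)\<^sup>2 = x powr (-2 + 2 * c)"
proof -
  have "(x powr c)\<^sup>2 = x powr (2 * c)" using assms by (simp add: powr_power)
  moreover have "(1/x)\<^sup>2 = x powr (-2)" using assms by (simp add: powr_minus_divide power_one_over)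
  ultimately show ?thesis by (simp only: powr_add mult.commute)
qed

theorem lemma9p1:
  fixes c\<^sub>2 C\<^sub>0 :: real
  assumes "0 < c\<^sub>2" "c\<^sub>2 < 1" "C\<^sub>0 \<ge> 1"
  shows "\<exists>C>0. \<forall>\<epsilon>::real. 0 < \<epsilon> \<and> \<epsilon> < 1 \<longrightarrow>
    (\<exists>N::nat. \<forall>n\<ge>N. \<forall>(a::real) (P::complex \<Rightarrow> complex) (W::complex \<Rightarrow> real) (w::real).
      a > 0 \<longrightarrow> P holomorphic_on UNIV \<longrightarrow> continuous_on UNIV W \<longrightarrow> (\<forall>z. W z > 0) \<longrightarrow>
      (\<forall>v\<in>{-1+\<epsilon>..1-\<epsilon>}. \<forall>z. cmod (z - complex_of_real v) \<le> 2 / real n \<longrightarrow>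
          1 / C\<^sub>0 \<le> W (complex_of_real a * z) / W (complex_of_real a * complex_of_real v) \<and>
          W (complex_of_real a * z) / W (complex_of_real a * complex_of_real v) \<le> C\<^sub>0) \<longrightarrow>
      w \<in> {-1+\<epsilon>..1-\<epsilon>} \<longrightarrow>
      cmod (P (complex_of_real w)) * W (complex_of_real a * complex_of_real w) \<ge> exp (- (real n powr c\<^sub>2)) \<longrightarrow>
      (\<forall>z\<in>ball (complex_of_real w) (3 / (2 * real n)).
          cmod (P z) * W (complex_of_real a * z) \<le> exp (real n powr c\<^sub>2)) \<longrightarrow>
      (\<integral>\<^sup>+ z \<in> ball (complex_of_real w) (1 / (2 * real n)).
          ennreal ((ln (cmod (P z) * W (complex_of_real a * z)))\<^sup>2) \<partial>lborel)
        \<le> ennreal (C * real n powr (-2 + 6 * c\<^sub>2)))"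
proof (intro exI[of _ "69 * pi * (12 + 5 * ln C\<^sub>0)\<^sup>2"] conjI allI impI exI[of _ "1::nat"])
  show "0 < 69 * pi * (12 + 5 * ln C\<^sub>0)\<^sup>2"
    using ln_ge_zero[OF assms(3)] by simp
next
  fix \<epsilon> n a P W w
  assume n: "n \<ge> 1" and hol: "P holomorphic_on UNIV" and W_pos: "\<forall>z. W z > 0"
    and ratio: "\<forall>v\<in>{-1+\<epsilon>..1-\<epsilon>}. \<forall>z. cmod (z - complex_of_real v) \<le> 2 / real n \<longrightarrow>
          1 / C\<^sub>0 \<le> W (complex_of_real a * z) / W (complex_of_real a * complex_of_real v) \<and>
          W (complex_of_real a * z) / W (complex_of_real a * complex_of_real v) \<le> C\<^sub>0"
    and w: "w \<in> {-1+\<epsilon>..1-\<epsilon>}"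
    and lower: "cmod (P (complex_of_real w)) * W (complex_of_real a * complex_of_real w) \<ge> exp (- (real n powr c\<^sub>2))"
    and upper: "\<forall>z\<in>ball (complex_of_real w) (3 / (2 * real n)).
          cmod (P z) * W (complex_of_real a * z) \<le> exp (real n powr c\<^sub>2)"
  define r where "r = 1 / real n"
  define X where "X = real n powr c\<^sub>2"
  have r: "r > 0" "3 * r / 2 = 3 / (2 * real n)" "r / 2 = 1 / (2 * real n)"
    using n by (simp_all add: r_def)
  have X: "X \<ge> 1" unfolding X_def using n assms(1) by (simp add: ge_one_powr_ge_zero)
  have ratio_w: "1 / C\<^sub>0 \<le> W (complex_of_real a * z) / W (complex_of_real a * complex_of_real w)
      \<and> W (complex_of_real a * z) / W (complex_of_real a * complex_of_real w) \<le> C\<^sub>0"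
    if "z \<in> ball (complex_of_real w) (3 * r / 2)" for z
  proof -
    have "cmod (z - complex_of_real w) \<le> 2 / real n"
      using that n unfolding r(2) by (simp add: dist_norm norm_minus_commute field_simps)
    then show ?thesis using ratio w by blast
  qed
  have integral: "(\<integral>\<^sup>+ z \<in> ball (complex_of_real w) (r / 2).
        ennreal ((ln (cmod (P z) * W (complex_of_real a * z)))\<^sup>2) \<partial>lborel)
      \<le> ennreal (69 * pi * (12 + 5 * ln C\<^sub>0)\<^sup>2 * X\<^sup>2 * r\<^sup>2)"
    by (rule nn_integral_ln_weighted_squared_le[OF r(1) X assms(3) hol,
          where V = "\<lambda>z. W (complex_of_real a * z)"])
      (use W_pos ratio_w lower upper in \<open>simp_all add: X_def r(2)\<close>)
  have "X\<^sup>2 * r\<^sup>2 \<le> real n powr (-2 + 6 * c\<^sub>2)"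
    unfolding X_def r_def using n assms(1)
    by (subst powr_squared_mult_inverse_squared) (auto intro: powr_mono)
  then have "ennreal (69 * pi * (12 + 5 * ln C\<^sub>0)\<^sup>2 * X\<^sup>2 * r\<^sup>2)
      \<le> ennreal (69 * pi * (12 + 5 * ln C\<^sub>0)\<^sup>2 * real n powr (-2 + 6 * c\<^sub>2))"
    by (intro ennreal_leI) (simp add: mult.assoc mult_left_mono)
  with integral show "(\<integral>\<^sup>+ z \<in> ball (complex_of_real w) (1 / (2 * real n)).
        ennreal ((ln (cmod (P z) * W (complex_of_real a * z)))\<^sup>2) \<partial>lborel)
      \<le> ennreal (69 * pi * (12 + 5 * ln C\<^sub>0)\<^sup>2 * real n powr (-2 + 6 * c\<^sub>2))"
    unfolding r(3) by (rule order_trans)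
qed

end
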